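(* Consider the chunk-based peer-to-peer streaming model described in the context, in which every node has normalized upload capacity $U$ (an integer $\ge 1$) and there is no restriction on the number of neighbors a node may deliver chunks to. Then for every integer $t\ge 0$ the stream diffusion metric satisfies $$N(t)\le \sum_{j=1}^{U} S_\infty(t-j+1).$$ In particular, for every integer $t\ge U$, $$N(t)\le \sum_{j=1}^{U}2^{t-j}=2^t\,(1-2^{-U}).$$
   Context: $S_\infty(n)=0$ for $n\le 0$ and $S_\infty(n)=\sum_{i=1}^n F_\infty(i)$ for $n>0$, where $F_\infty(i)=0$ for $i\le 0$, $F_\infty(1)=1$, and $F_\infty(i)=\sum_{j\ge 1}F_\infty(i-j)=\sum_{m<i}F_\infty(m)$ for $i>1$. Consequently $S_\infty(n)=2^{n-1}$ for $n\ge 1$. Model: there is a source and a set $\mathcal P$ of peers. The source generates chunk $c=1,2,\dots$ at time $(c-1)U$, with time measured in units of the time needed to transmit one chunk at a node's full upload bandwidth. Every node has total upload rate at most one chunk per time unit, which it may split arbitrarily among simultaneous transmissions. Forwarding is store-and-forward: a chunk must be fully received before it is forwarded. Download bandwidth is unlimited, and propagation and queueing delays are zero. $d(c,p)$ is the time from the generation of chunk $c$ to the completion of its reception at peer $p$, and $D(p)=\sup_c d(c,p)$. The stream diffusion metric is $N(t)=|\{p\in\mathcal P:D(p)\le t\}|$. *)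

theory Defs
  imports "HOL-Analysis.Analysis"
begin

function F_inf :: "int \<Rightarrow> nat" where
  "F_inf i = (if i \<le> 0 then 0 else if i = 1 then 1
              else (\<Sum>m\<in>{1..<i}. F_inf m))"
  by auto
termination
  by (relation "Wellfounded.measure nat") auto

declare F_inf.simps [simp del]

definition S_inf :: "int \<Rightarrow> nat" where
  "S_inf n = (if n \<le> 0 then 0 else (\<Sum>i\<in>{1..n}. F_inf i))"

text \<open>Nodes are of type 'p option: None is the source, Some q is peer q.
  A schedule x assigns to every sender s, receiver p and chunk c a bandwidth
  (rate) function x s p c :: real => real; time is real, measured in units of
  one chunk transmission at full upload bandwidth. Chunks are c = 1,2,...;
  chunk c is generated at the source at time (c-1)U.\<close>

type_synonym 'p schedule = "'p option \<Rightarrow> 'p \<Rightarrow> nat \<Rightarrow> real \<Rightarrow> real"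

definition sent :: "'p schedule \<Rightarrow> 'p option \<Rightarrow> 'p \<Rightarrow> nat \<Rightarrow> real \<Rightarrow> real" where
  "sent x s p c tau = integral {0..tau} (x s p c)"

definition is_node :: "'p set \<Rightarrow> 'p option \<Rightarrow> bool" where
  "is_node P s \<longleftrightarrow> (s = None \<or> (\<exists>q\<in>P. s = Some q))"

text \<open>Time at which peer p has completely received chunk c (from a single
  sender, store-and-forward of whole chunks); infinity if never.\<close>
definition recv :: "'p set \<Rightarrow> 'p schedule \<Rightarrow> 'p \<Rightarrow> nat \<Rightarrow> ereal" where
  "recv P x p c = Inf {ereal tau | tau s. tau \<ge> 0 \<and> is_node P s \<and> sent x s p c tau \<ge> 1}"

definition valid_schedule :: "'p set \<Rightarrow> nat \<Rightarrow> 'p schedule \<Rightarrow> bool" where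
  "valid_schedule P U x \<longleftrightarrow>
     \<comment> \<open>rates are nonnegative and locally integrable\<close>
     (\<forall>s p c tau. x s p c tau \<ge> 0) \<and>
     (\<forall>s p c tau. (x s p c) integrable_on {0..tau}) \<and>
     \<comment> \<open>only actual nodes send, only peers receive, only chunks c \<ge> 1 exist\<close>
     (\<forall>s p c tau. (\<not> is_node P s \<or> p \<notin> P \<or> c = 0) \<longrightarrow> x s p c tau = 0) \<and>
     \<comment> \<open>upload capacity: total rate of every node is at most one chunk per time unit\<close>
     (\<forall>s tau F. finite F \<longrightarrow> (\<Sum>(p, c)\<in>F. x s p c tau) \<le> 1) \<and>
     \<comment> \<open>source can only send chunk c after its generation time (c-1)U\<close>
     (\<forall>p c tau. x None p c tau > 0 \<longrightarrow> real ((c - 1) * U) \<le> tau) \<and>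
     \<comment> \<open>store-and-forward: a peer forwards c only after fully receiving it\<close>
     (\<forall>q p c tau. x (Some q) p c tau > 0 \<longrightarrow> recv P x q c \<le> ereal tau)"

definition delay :: "'p set \<Rightarrow> nat \<Rightarrow> 'p schedule \<Rightarrow> nat \<Rightarrow> 'p \<Rightarrow> ereal" where
  "delay P U x c p = recv P x p c - ereal (real ((c - 1) * U))"

definition Dmax :: "'p set \<Rightarrow> nat \<Rightarrow> 'p schedule \<Rightarrow> 'p \<Rightarrow> ereal" where
  "Dmax P U x p = (SUP c\<in>{1..}. delay P U x c p)"

definition Ndiff :: "'p set \<Rightarrow> nat \<Rightarrow> 'p schedule \<Rightarrow> real \<Rightarrow> nat" where
  "Ndiff P U x t = card {p\<in>P. Dmax P U x p \<le> ereal t}"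

end

theory Submission
  imports Defs
begin

text \<open>
  Fix a chunk c and a horizon T.  Each peer q holding c at time T received it completely,
  at time r q, from one sender, its parent; the parents form a forest rooted at the source.
  A peer forwards c only after its own receipt and with unit capacity, so at most k of its
  children are served by time r p + k; this yields the Kraft-type inequality
  1 + (\<Sum> children q. 2^(T - r q)) \<le> 2^(T - r p), and summing over the forest bounds the
  number of holders by 2^T times the weight \<Sum> 2^(-r q) of the source's children.  The
  source serves all chunks c \<ge> a, from time (a - 1) U on, with unit capacity, which bounds
  these weights across chunks.  A peer with delay at most t holds every chunk c at time
  (c - 1) U + t; Abel summation over chunks 1..M and M \<rightarrow> \<infinity> give N(t) \<le> 2^t (1 - 2^-U).
  Integrality of N(t) and S_inf(n) = 2^(n-1) yield the stated bounds.
\<close>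

subsection \<open>Closed forms\<close>

lemma F_inf_succ: "k \<ge> 1 \<Longrightarrow> F_inf (int k + 1) = S_inf (int k)"
  by (subst F_inf.simps) (simp add: S_inf_def atLeastLessThanPlusOne_atLeastAtMost_int)

lemma S_inf_closed_form: "k \<ge> 1 \<Longrightarrow> S_inf (int k) = 2^(k-1)"
proof (induction k)
  case 0 then show ?case by simp
next
  case (Suc k)
  show ?case
  proof (cases "k = 0")
    case True
    then show ?thesis by (simp add: S_inf_def F_inf.simps)
  next
    case False
    have "S_inf (int (Suc k)) = S_inf (int k) + F_inf (int k + 1)"
      unfolding S_inf_def using False
      by (simp add: atLeastAtMostPlus1_int_conv add.commute)
    also have "\<dots> = 2 * S_inf (int k)" using F_inf_succ[of k] False by simp
    finally show ?thesis using Suc.IH False by (simp add: power_eq_if)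
  qed
qed

text \<open>The window sum of the bound in closed form; terms with nonpositive index vanish.\<close>
lemma S_inf_window_sum:
  "real (\<Sum>j\<in>{1..U}. S_inf (int t - int j + 1)) = 2^t - 2^(t - min t U)"
proof (induction U)
  case 0 then show ?case by simp
next
  case (Suc U)
  have idx: "int t - int (Suc U) + 1 = int t - int U" by simp
  show ?case
  proof (cases "Suc U \<le> t")
    case True
    have "S_inf (int t - int U) = 2^(t - Suc U)"
      using S_inf_closed_form[of "t - U"] True by (simp add: of_nat_diff)
    moreover have "(2::real)^(t-U) = 2 * 2^(t - Suc U)" using True
      by (metis Suc_diff_Suc Suc_le_lessD power_Suc)
    ultimately show ?thesis using Suc.IH True by (simp add: idx min_def)
  next
    case False
    have "S_inf (int t - int U) = 0" using False by (simp add: S_inf_def)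
    then show ?thesis using Suc.IH False by (simp add: idx min_def)
  qed
qed

lemma power_window_sum:
  "t \<ge> U \<Longrightarrow> (\<Sum>j\<in>{1..U}. (2::real) ^ (t - j)) = 2 ^ t * (1 - (1/2) ^ U)"
proof (induction U)
  case 0 then show ?case by simp
next
  case (Suc U)
  have "(2::real)^t * (1/2)^U = 2^(t-U)" using Suc.prems
    by (simp add: power_diff power_one_over field_simps)
  moreover have "(2::real)^t * (1/2)^(Suc U) = 2^(t - Suc U)" using Suc.prems
    by (simp add: power_diff power_one_over field_simps del: power_Suc)
  moreover have "(2::real)^(t-U) = 2 * 2^(t - Suc U)" using Suc.prems
    by (metis Suc_diff_Suc Suc_le_lessD power_Suc)
  ultimately show ?case using Suc by (simp add: algebra_simps)
qed

text \<open>Integrality: a natural number below 2^t (1 - 2^-U) is below the window sum of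
  S_inf.  For t < U the real bound is below 2^t, hence at most 2^t - 1.\<close>
lemma nat_le_S_inf_window:
  fixes n t U :: nat
  assumes bound: "real n \<le> 2^t * (1 - (1/2)^U)"
  shows "n \<le> (\<Sum>j\<in>{1..U}. S_inf (int t - int j + 1))"
proof -
  have "real n \<le> 2^t - 2^(t - min t U)"
  proof (cases "U \<le> t")
    case True
    have "(2::real)^t * (1 - (1/2)^U) = 2^t - 2^(t-U)" using True
      by (simp add: power_diff power_one_over field_simps)
    then show ?thesis using bound True by simp
  next
    case False
    have "(2::real)^t * (1 - (1/2)^U) < 2^t" by simp
    then have "real n < 2^t" using bound by linarith
    then have "n < 2^t" by (metis of_nat_less_iff of_nat_numeral of_nat_power)
    then have "real (n + 1) \<le> real ((2::nat)^t)" by (simp only: of_nat_le_iff)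
    then have "real n \<le> 2^t - 1" by simp
    then show ?thesis using False by simp
  qed
  then have "real n \<le> real (\<Sum>j\<in>{1..U}. S_inf (int t - int j + 1))"
    by (simp only: S_inf_window_sum)
  then show ?thesis by (simp only: of_nat_le_iff)
qed

subsection \<open>Model-independent estimates\<close>

text \<open>Induction on |K|,
  removing an item of maximal finishing time, which is at least a + |K|.\<close>
lemma staggered_weight_bound:
  fixes r :: "'a \<Rightarrow> real" and a :: real
  assumes "finite K"
    and "\<And>S R. S \<subseteq> K \<Longrightarrow> S \<noteq> {} \<Longrightarrow> (\<forall>q\<in>S. r q \<le> R) \<Longrightarrow> real (card S) \<le> R - a"
  shows "(\<Sum>q\<in>K. 2 powr (- r q)) \<le> 2 powr (-a) - 2 powr (-a - real (card K))"
  using assms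
proof (induction "card K" arbitrary: K)
  case 0
  then show ?case by simp
next
  case (Suc n)
  then have "K \<noteq> {}" by auto
  then have "Max (r ` K) \<in> r ` K" using Suc.prems(1) by simp
  then obtain q0 where q0: "q0 \<in> K" "Max (r ` K) = r q0" by blast
  have q0_latest: "\<forall>q\<in>K. r q \<le> r q0"
    using q0(2) Suc.prems(1) by (metis Max_ge finite_imageI imageI)
  have "real (card K) \<le> r q0 - a" using Suc.prems(2)[of K "r q0"] \<open>K \<noteq> {}\<close> q0_latest by auto
  then have "2 powr (- r q0) \<le> 2 powr (-a - real (Suc n))" using Suc.hyps(2) by simp
  moreover have "card (K - {q0}) = n" using Suc.hyps(2) q0(1) by simp
  moreover have "(\<Sum>q\<in>K - {q0}. 2 powr (- r q)) \<le> 2 powr (-a) - 2 powr (-a - real (card (K - {q0})))"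
  proof (rule Suc.hyps(1))
    show "n = card (K - {q0})" using Suc.hyps(2) q0(1) by simp
    show "real (card S) \<le> R - a" if "S \<subseteq> K - {q0}" "S \<noteq> {}" "\<forall>q\<in>S. r q \<le> R" for S R
      using Suc.prems(2)[of S R] that by blast
  qed (use Suc.prems(1) in simp)
  moreover have "(\<Sum>q\<in>K. 2 powr (- r q)) = 2 powr (- r q0) + (\<Sum>q\<in>K - {q0}. 2 powr (- r q))"
    using Suc.prems(1) q0(1) by (simp add: sum.remove)
  moreover have "2 powr (-a - real n) = 2 * 2 powr (-a - real (Suc n))"
  proof -
    have "-a - real n = 1 + (-a - real (Suc n))" by simp
    then show ?thesis by (simp only: powr_add) simp
  qed
  ultimately show ?case using Suc.hyps(2) by (simp only:)
qed

lemma capacity_count_bound: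
  fixes f :: "'i \<Rightarrow> real \<Rightarrow> real"
  assumes "finite S" "S \<noteq> {}"
    and integrable: "\<And>i. i \<in> S \<Longrightarrow> f i integrable_on {0..R}"
    and capacity: "\<And>\<tau>. (\<Sum>i\<in>S. f i \<tau>) \<le> 1"
    and idle: "\<And>i \<tau>. i \<in> S \<Longrightarrow> \<tau> < a \<Longrightarrow> f i \<tau> = 0" and "0 \<le> a"
    and delivered: "\<And>i. i \<in> S \<Longrightarrow> 1 \<le> integral {0..R} (f i)"
  shows "real (card S) \<le> R - a"
proof -
  define busy :: "real \<Rightarrow> real" where "busy \<tau> = (if \<tau> \<in> {a..} then 1 else 0)" for \<tau>
  have busy_int: "busy integrable_on {0..R}"
    unfolding busy_def integrable_restrict_Int using \<open>0 \<le> a\<close>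
    by (simp add: Int_atLeastAtMost integrable_const_ivl)
  have "real (card S) \<le> (\<Sum>i\<in>S. integral {0..R} (f i))"
    using sum_mono[of S "\<lambda>_. 1" "\<lambda>i. integral {0..R} (f i)"] delivered by simp
  also have "\<dots> = integral {0..R} (\<lambda>\<tau>. \<Sum>i\<in>S. f i \<tau>)"
    by (rule integral_sum[symmetric]) (use \<open>finite S\<close> integrable in auto)
  also have "\<dots> \<le> integral {0..R} busy"
  proof (rule integral_le)
    show "(\<lambda>\<tau>. \<Sum>i\<in>S. f i \<tau>) integrable_on {0..R}" by (rule integrable_sum) (use \<open>finite S\<close> integrable in auto)
    show "(\<Sum>i\<in>S. f i \<tau>) \<le> busy \<tau>" for \<tau>
      using capacity[of \<tau>] idle[of _ \<tau>] by (auto simp: busy_def intro!: sum.neutral)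
  qed (rule busy_int)
  also have "\<dots> = integral {a..R} (\<lambda>_. 1)"
    unfolding busy_def integral_restrict_Int using \<open>0 \<le> a\<close> by (simp add: Int_atLeastAtMost)
  finally have "real (card S) \<le> (if a \<le> R then R - a else 0)" by simp
  moreover have "card S \<ge> 1" using assms(1,2) by (simp add: Suc_leI card_gt_0_iff)
  ultimately show ?thesis by (auto split: if_splits)
qed

lemma weighted_tail_sum_bound:
  fixes V :: "nat \<Rightarrow> real" and U M :: nat
  assumes tails: "\<And>a. 1 \<le> a \<Longrightarrow> a \<le> M \<Longrightarrow> (2::real)^((a-1)*U) * (\<Sum>c\<in>{a..M}. V c) \<le> 1"
  shows "(\<Sum>c\<in>{1..M}. (2::real)^((c-1)*U) * V c) \<le> 1 + real (M - 1) * (1 - (1/2)^U)"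
proof (cases "M = 0")
  case True then show ?thesis by simp
next
  case False
  have tail_step: "(\<Sum>c\<in>{M-k..M}. (2::real)^((c-1)*U) * V c)
      \<le> 2^((M-k-1)*U) * (\<Sum>c\<in>{M-k..M}. V c) + real k * (1 - (1/2)^U)" if "k < M" for k
    using that
  proof (induction k)
    case 0 then show ?case by (simp add: sum_distrib_left)
  next
    case (Suc k)
    define a where "a = M - Suc k"
    have "a \<ge> 1" "a < M" "M - k = a + 1" using Suc.prems unfolding a_def by auto
    have split: "{a..M} = insert a {a+1..M}" using \<open>a < M\<close> by auto
    define T where "T = (\<Sum>c\<in>{a+1..M}. V c)"
    define e where "e = (2::real)^((a-1)*U)"
    have next_scale: "(2::real)^(a*U) = e * 2^U" unfolding e_def using \<open>a \<ge> 1\<close>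
      by (metis Suc_diff_1 less_le_trans mult_Suc power_add zero_less_one mult.commute add.commute)
    have ET: "2^(a*U) * T \<le> 1" using tails[of "a+1"] \<open>a < M\<close> unfolding T_def by simp
    have IH: "(\<Sum>c\<in>{a+1..M}. (2::real)^((c-1)*U) * V c) \<le> 2^(a*U) * T + real k * (1 - (1/2)^U)"
      using Suc.IH Suc.prems \<open>M - k = a + 1\<close> unfolding T_def by simp
    have "(1/2::real)^U * 2^U = 1" by (simp add: power_mult_distrib[symmetric])
    then have "2^(a*U) * T - e * T = (1 - (1/2)^U) * (2^(a*U) * T)"
      using next_scale by (simp add: algebra_simps)
    also have "\<dots> \<le> 1 - (1/2)^U"
      using mult_left_mono[OF ET, of "1 - (1/2)^U"] by (simp add: power_le_one)
    finally have gain: "2^(a*U) * T - e * T \<le> 1 - (1/2)^U" .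
    have "(\<Sum>c\<in>{a..M}. (2::real)^((c-1)*U) * V c) \<le> e * (\<Sum>c\<in>{a..M}. V c) + real (Suc k) * (1 - (1/2)^U)"
      using IH gain unfolding split e_def T_def by (simp add: algebra_simps)
    then show ?case unfolding e_def a_def .
  qed
  have "M - (M - 1) = 1" using False by simp
  then show ?thesis using tail_step[of "M-1"] tails[of 1] False by simp
qed

lemma le_of_linear_growth:
  fixes n A B :: real
  assumes "\<And>M::nat. 1 \<le> M \<Longrightarrow> real M * n \<le> A + real M * B"
  shows "n \<le> B"
proof (rule ccontr)
  assume "\<not> n \<le> B"
  then have gap: "n - B > 0" by simp
  obtain M :: nat where M: "max 1 (A / (n - B)) < real M" using reals_Archimedean2 by blast
  then have "1 \<le> M" "A < real M * (n - B)" using gap by (auto simp: divide_less_eq mult.commute)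
  then show False using assms[of M] by (simp add: algebra_simps)
qed

lemma schedule_nonneg: "valid_schedule P U x \<Longrightarrow> 0 \<le> x s p c \<tau>"
  unfolding valid_schedule_def by (drule conjunct1) simp

lemma schedule_integrable: "valid_schedule P U x \<Longrightarrow> x s p c integrable_on {0..\<tau>}"
  unfolding valid_schedule_def by (drule conjunct2, drule conjunct1) simp

lemma source_release: "valid_schedule P U x \<Longrightarrow> x None p c \<tau> > 0 \<Longrightarrow> real ((c - 1) * U) \<le> \<tau>"
  unfolding valid_schedule_def by blast

lemma store_and_forward: "valid_schedule P U x \<Longrightarrow> x (Some q) p c \<tau> > 0 \<Longrightarrow> recv P x q c \<le> ereal \<tau>"
  unfolding valid_schedule_def by blast

lemma schedule_capacity:
  assumes "valid_schedule P U x" "finite S" "inj_on (\<lambda>i. (p i, c i)) S"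
  shows "(\<Sum>i\<in>S. x s (p i) (c i) \<tau>) \<le> 1"
proof -
  have "(\<Sum>(q, d)\<in>(\<lambda>i. (p i, c i)) ` S. x s q d \<tau>) \<le> 1"
    using assms(1,2) unfolding valid_schedule_def by blast
  then show ?thesis using assms(3) by (simp add: sum.reindex)
qed

lemma forward_idle_before_receipt:
  assumes "valid_schedule P U x" "ereal \<tau> < recv P x p c"
  shows "x (Some p) q c \<tau> = 0"
  using store_and_forward[OF assms(1), of p q c \<tau>] schedule_nonneg[OF assms(1), of "Some p" q c \<tau>] assms(2)
  by fastforce

lemma sent_mono: "valid_schedule P U x \<Longrightarrow> \<tau>1 \<le> \<tau>2 \<Longrightarrow> sent x s p c \<tau>1 \<le> sent x s p c \<tau>2"
  unfolding sent_def by (rule integral_subset_le) (auto intro: schedule_integrable schedule_nonneg)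

lemma recv_nonneg: "0 \<le> recv P x q c"
  unfolding recv_def by (rule Inf_greatest) auto

lemma finite_nodes: "finite P \<Longrightarrow> finite {s. is_node P s}"
proof -
  assume "finite P"
  have "{s. is_node P s} = insert None (Some ` P)" unfolding is_node_def by auto
  then show ?thesis using \<open>finite P\<close> by simp
qed

text \<open>The amounts sent are continuous in time, so if no node has delivered a full chunk
  by time v, none has slightly later either.\<close>
lemma sent_stays_below_one:
  assumes V: "valid_schedule P U x" and fP: "finite P" and "0 \<le> v"
    and below: "\<And>s. is_node P s \<Longrightarrow> sent x s q c v < 1"
  obtains b where "v < b" "\<And>s \<tau>. is_node P s \<Longrightarrow> 0 \<le> \<tau> \<Longrightarrow> \<tau> < b \<Longrightarrow> sent x s q c \<tau> < 1"
proof -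
  have "eventually (\<lambda>\<tau>. sent x s q c \<tau> < 1) (at v within {0..v+1})" if "is_node P s" for s
  proof (rule order_tendstoD(2))
    have "continuous_on {0..v+1} (\<lambda>\<tau>. integral {0..\<tau>} (x s q c))"
      by (rule indefinite_integral_continuous_1) (rule schedule_integrable[OF V])
    then show "((\<lambda>\<tau>. sent x s q c \<tau>) \<longlongrightarrow> sent x s q c v) (at v within {0..v+1})"
      unfolding continuous_on_def sent_def using \<open>0 \<le> v\<close> by simp
  qed (use below that in blast)
  then have "eventually (\<lambda>\<tau>. \<forall>s\<in>{s. is_node P s}. sent x s q c \<tau> < 1) (at v within {0..v+1})"
    by (intro eventually_ball_finite[OF finite_nodes[OF fP]]) blast
  then obtain d where "d > 0" and near:
    "\<And>\<tau>. \<tau> \<in> {0..v+1} \<Longrightarrow> \<tau> \<noteq> v \<Longrightarrow> dist \<tau> v < d \<Longrightarrow> \<forall>s\<in>{s. is_node P s}. sent x s q c \<tau> < 1"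
    unfolding eventually_at by blast
  show ?thesis
  proof
    show "v < v + min d 1" using \<open>d > 0\<close> by simp
    fix s \<tau> assume s: "is_node P s" and "0 \<le> \<tau>" "\<tau> < v + min d 1"
    show "sent x s q c \<tau> < 1"
    proof (cases "\<tau> \<le> v")
      case True
      then show ?thesis using sent_mono[OF V True, of s q c] below[OF s] by linarith
    next
      case False
      then show ?thesis using near[of \<tau>] s \<open>0 \<le> \<tau>\<close> \<open>\<tau> < v + min d 1\<close> by (auto simp: dist_real_def)
    qed
  qed
qed

lemma recv_attained:
  assumes V: "valid_schedule P U x" and fP: "finite P" and r: "recv P x q c = ereal v"
  shows "\<exists>s. is_node P s \<and> 0 \<le> v \<and> 1 \<le> sent x s q c v"
proof (rule ccontr)
  assume neg: "\<not> ?thesis"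
  have "0 \<le> v" using recv_nonneg[of P x q c] r by simp
  have below: "sent x s q c v < 1" if "is_node P s" for s
    using neg that \<open>0 \<le> v\<close> by (simp add: not_le)
  obtain b where "v < b" and early: "\<And>s \<tau>. is_node P s \<Longrightarrow> 0 \<le> \<tau> \<Longrightarrow> \<tau> < b \<Longrightarrow> sent x s q c \<tau> < 1"
    using sent_stays_below_one[OF V fP \<open>0 \<le> v\<close> below] by blast
  have "ereal b \<le> recv P x q c"
    unfolding recv_def
  proof (rule Inf_greatest, clarify)
    fix \<tau> s assume "0 \<le> \<tau>" "is_node P s" "1 \<le> sent x s q c \<tau>"
    then have "\<not> \<tau> < b" using early[of s \<tau>] by linarith
    then show "ereal b \<le> ereal \<tau>" by simp
  qed
  then show False using r \<open>v < b\<close> by simp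
qed

subsection \<open>The delivery forest of a chunk\<close>

definition recv_time :: "'p set \<Rightarrow> 'p schedule \<Rightarrow> nat \<Rightarrow> 'p \<Rightarrow> real" where
  "recv_time P x c q = real_of_ereal (recv P x q c)"

definition parent :: "'p set \<Rightarrow> 'p schedule \<Rightarrow> nat \<Rightarrow> 'p \<Rightarrow> 'p option" where
  "parent P x c q = (SOME s. is_node P s \<and> 1 \<le> sent x s q c (recv_time P x c q))"

definition holders :: "'p set \<Rightarrow> 'p schedule \<Rightarrow> nat \<Rightarrow> real \<Rightarrow> 'p set" where
  "holders P x c T = {q\<in>P. recv P x q c \<le> ereal T}"

definition children :: "'p set \<Rightarrow> 'p schedule \<Rightarrow> nat \<Rightarrow> real \<Rightarrow> 'p option \<Rightarrow> 'p set" where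
  "children P x c T s = {q\<in>holders P x c T. parent P x c q = s}"

definition source_weight :: "'p set \<Rightarrow> 'p schedule \<Rightarrow> nat \<Rightarrow> real \<Rightarrow> real" where
  "source_weight P x c T = (\<Sum>q\<in>children P x c T None. 2 powr (- recv_time P x c q))"

lemma finite_holders: "finite P \<Longrightarrow> finite (holders P x c T)"
  unfolding holders_def by simp

lemma finite_children: "finite P \<Longrightarrow> finite (children P x c T s)"
  unfolding children_def holders_def by simp

lemma holder_receipt:
  assumes V: "valid_schedule P U x" and fP: "finite P" and q: "q \<in> holders P x c T"
  shows "recv P x q c = ereal (recv_time P x c q)" "0 \<le> recv_time P x c q" "recv_time P x c q \<le> T"
    "is_node P (parent P x c q)" "1 \<le> sent x (parent P x c q) q c (recv_time P x c q)"
proof -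
  have le: "recv P x q c \<le> ereal T" using q unfolding holders_def by simp
  obtain v where v: "recv P x q c = ereal v" using le recv_nonneg[of P x q c] by (cases "recv P x q c") auto
  have rv: "recv_time P x c q = v" unfolding recv_time_def v by simp
  obtain s where s: "is_node P s" "0 \<le> v" "1 \<le> sent x s q c v"
    using recv_attained[OF V fP v] by blast
  have "is_node P (parent P x c q) \<and> 1 \<le> sent x (parent P x c q) q c (recv_time P x c q)"
    unfolding parent_def rv by (rule someI[of _ s]) (use s in simp)
  then show "recv P x q c = ereal (recv_time P x c q)" "0 \<le> recv_time P x c q" "recv_time P x c q \<le> T"
    "is_node P (parent P x c q)" "1 \<le> sent x (parent P x c q) q c (recv_time P x c q)"
    using v rv s le by auto
qed

lemma delivered_by:
  assumes V: "valid_schedule P U x" and fP: "finite P"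
    and q: "q \<in> holders P x c T" and R: "recv_time P x c q \<le> R"
  shows "1 \<le> integral {0..R} (x (parent P x c q) q c)"
  using holder_receipt(5)[OF V fP q] sent_mono[OF V R, of "parent P x c q" q c]
  unfolding sent_def by simp

lemma parent_holder:
  assumes V: "valid_schedule P U x" and fP: "finite P" and q: "q \<in> holders P x c T"
    and pq: "parent P x c q = Some p"
  shows "p \<in> holders P x c T" "recv_time P x c p \<le> recv_time P x c q"
proof -
  have pP: "p \<in> P" using holder_receipt(4)[OF V fP q] pq unfolding is_node_def by auto
  have early: "recv P x p c \<le> ereal (recv_time P x c q)"
  proof (rule ccontr)
    assume "\<not> recv P x p c \<le> ereal (recv_time P x c q)"
    have silent: "x (Some p) q c \<tau> = 0" if "\<tau> \<in> {0..recv_time P x c q}" for \<tau>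
    proof (rule forward_idle_before_receipt[OF V])
      show "ereal \<tau> < recv P x p c"
        using that \<open>\<not> recv P x p c \<le> ereal (recv_time P x c q)\<close> by (meson atLeastAtMost_iff ereal_less_eq(3) le_less_trans not_le)
    qed
    have "sent x (Some p) q c (recv_time P x c q) = integral {0..recv_time P x c q} (\<lambda>_. 0::real)"
      unfolding sent_def by (rule integral_cong) (rule silent)
    then have "sent x (Some p) q c (recv_time P x c q) = 0" by simp
    then show False using holder_receipt(5)[OF V fP q] pq by simp
  qed
  then have "recv P x p c \<le> ereal T" using holder_receipt(3)[OF V fP q] order_trans by fastforce
  then show pH: "p \<in> holders P x c T" unfolding holders_def using pP by simp
  show "recv_time P x c p \<le> recv_time P x c q" using early holder_receipt(1)[OF V fP pH] by simp
qed

text \<open>Kraft-type inequality at a peer p: p serves its children with unit capacity and only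
  after its own receipt, so by the two counting lemmas
  1 + \<Sum> children q. 2^(T - r q) \<le> 2^(T - r p).\<close>
lemma peer_weight_bound:
  assumes V: "valid_schedule P U x" and fP: "finite P" and p: "p \<in> holders P x c T"
  shows "1 + (\<Sum>q\<in>children P x c T (Some p). 2 powr (T - recv_time P x c q))
           \<le> 2 powr (T - recv_time P x c p)"
proof -
  define K where "K = children P x c T (Some p)"
  define a where "a = recv_time P x c p"
  have fK: "finite K" unfolding K_def using finite_children[OF fP] .
  have K_holders: "q \<in> holders P x c T" "parent P x c q = Some p" if "q \<in> K" for q
    using that unfolding K_def children_def by auto
  have count: "real (card S) \<le> R - a"
    if S: "S \<subseteq> K" "S \<noteq> {}" "\<forall>q\<in>S. recv_time P x c q \<le> R" for S R
  proof (rule capacity_count_bound[where f = "\<lambda>q. x (Some p) q c"])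
    show "finite S" using S fK finite_subset by blast
    then show "(\<Sum>q\<in>S. x (Some p) q c \<tau>) \<le> 1" for \<tau>
      by (rule schedule_capacity[OF V]) (simp add: inj_on_def)
    show "x (Some p) q c \<tau> = 0" if "\<tau> < a" for q \<tau>
      using that holder_receipt(1)[OF V fP p] unfolding a_def
      by (intro forward_idle_before_receipt[OF V]) simp
    show "1 \<le> integral {0..R} (x (Some p) q c)" if "q \<in> S" for q
      using delivered_by[OF V fP K_holders(1)] K_holders(2) that S by auto
  qed (use S holder_receipt(2)[OF V fP p] in \<open>auto simp: a_def intro: schedule_integrable[OF V]\<close>)
  have "a + real (card K) \<le> T"
  proof (cases "K = {}")
    case True then show ?thesis using holder_receipt(3)[OF V fP p] unfolding a_def by simp
  next
    case False
    then show ?thesis using count[of K T] holder_receipt(3)[OF V fP] K_holders by auto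
  qed
  then have "2 powr (-T) \<le> 2 powr (-a - real (card K))" by simp
  then have weights: "(\<Sum>q\<in>K. 2 powr (- recv_time P x c q)) \<le> 2 powr (-a) - 2 powr (-T)"
    using staggered_weight_bound[where r = "recv_time P x c", OF fK count] by linarith
  have "(\<Sum>q\<in>K. 2 powr (T - recv_time P x c q)) = 2 powr T * (\<Sum>q\<in>K. 2 powr (- recv_time P x c q))"
    by (simp add: sum_distrib_left powr_add[symmetric])
  also have "\<dots> \<le> 2 powr T * (2 powr (-a) - 2 powr (-T))" by (rule mult_left_mono[OF weights]) simp
  also have "\<dots> = 2 powr (T - a) - 1"
    by (simp add: right_diff_distrib powr_add[symmetric])
  finally show ?thesis unfolding K_def a_def by simp
qed

lemma holders_weight_bound:
  assumes V: "valid_schedule P U x" and fP: "finite P"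
  shows "real (card (holders P x c T)) \<le> 2 powr T * source_weight P x c T"
proof -
  define H where "H = holders P x c T"
  define w where "w q = 2 powr (T - recv_time P x c q)" for q
  define B where "B = {q\<in>H. parent P x c q \<noteq> None}"
  have fH: "finite H" unfolding H_def using finite_holders[OF fP] .
  have parents: "parent P x c ` B \<subseteq> Some ` H"
    using parent_holder(1)[OF V fP] unfolding B_def H_def by fastforce
  have "(\<Sum>p\<in>H. \<Sum>q\<in>children P x c T (Some p). w q)
        = (\<Sum>s\<in>Some ` H. \<Sum>q\<in>{q\<in>B. parent P x c q = s}. w q)"
    by (auto simp: sum.reindex B_def children_def H_def intro!: sum.cong)
  also have "\<dots> = (\<Sum>q\<in>B. w q)"
    by (rule sum.group[OF _ _ parents]) (use fH in \<open>auto simp: B_def\<close>)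
  finally have grouped: "(\<Sum>p\<in>H. \<Sum>q\<in>children P x c T (Some p). w q) = (\<Sum>q\<in>B. w q)" .
  have "real (card H) + (\<Sum>q\<in>B. w q) = (\<Sum>p\<in>H. 1 + (\<Sum>q\<in>children P x c T (Some p). w q))"
    using grouped by (simp add: sum.distrib)
  also have "\<dots> \<le> (\<Sum>p\<in>H. w p)"
    by (rule sum_mono) (use peer_weight_bound[OF V fP] in \<open>auto simp: H_def w_def\<close>)
  also have "\<dots> = (\<Sum>q\<in>children P x c T None. w q) + (\<Sum>q\<in>B. w q)"
  proof -
    have "H = children P x c T None \<union> B" "children P x c T None \<inter> B = {}"
      unfolding B_def children_def H_def by auto
    then show ?thesis using fH by (simp add: sum.union_disjoint)
  qed
  finally have "real (card H) \<le> (\<Sum>q\<in>children P x c T None. w q)" by simp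
  then show ?thesis
    unfolding H_def w_def source_weight_def by (simp add: sum_distrib_left powr_add[symmetric])
qed

text \<open>The source serves every chunk c \<ge> a with unit capacity, starting no earlier than
  (a - 1) U; the counting lemmas bound the weight of its subtrees over chunks a..M.\<close>
lemma source_weight_bound:
  assumes V: "valid_schedule P U x" and fP: "finite P"
  shows "(2::real)^((a-1)*U) * (\<Sum>c\<in>{a..M}. source_weight P x c (T c)) \<le> 1"
proof -
  define KK where "KK = Sigma {a..M} (\<lambda>c. children P x c (T c) None)"
  define a' where "a' = real ((a-1)*U)"
  define r where "r i = recv_time P x (fst i) (snd i)" for i
  have fKK: "finite KK" unfolding KK_def using finite_children[OF fP] by simp
  have KK_holders: "snd i \<in> holders P x (fst i) (T (fst i))" "parent P x (fst i) (snd i) = None"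
    "a \<le> fst i" if "i \<in> KK" for i
    using that unfolding KK_def children_def by auto
  have count: "real (card S) \<le> R - a'" if S: "S \<subseteq> KK" "S \<noteq> {}" "\<forall>i\<in>S. r i \<le> R" for S R
  proof (rule capacity_count_bound[where f = "\<lambda>i. x None (snd i) (fst i)"])
    show "finite S" using S fKK finite_subset by blast
    then show "(\<Sum>i\<in>S. x None (snd i) (fst i) \<tau>) \<le> 1" for \<tau>
      by (rule schedule_capacity[OF V]) (simp add: inj_on_def prod_eq_iff)
    show "x None (snd i) (fst i) \<tau> = 0" if i: "i \<in> S" and "\<tau> < a'" for i \<tau>
    proof (rule ccontr)
      assume "x None (snd i) (fst i) \<tau> \<noteq> 0"
      then have "x None (snd i) (fst i) \<tau> > 0"
        using schedule_nonneg[OF V, of None "snd i" "fst i" \<tau>] by simp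
      then have "real ((fst i - 1) * U) \<le> \<tau>" by (rule source_release[OF V])
      moreover have "a \<le> fst i" using KK_holders(3) i S by blast
      then have "(a - 1) * U \<le> (fst i - 1) * U" by (intro mult_le_mono1 diff_le_mono)
      ultimately show False using \<open>\<tau> < a'\<close> unfolding a'_def by linarith
    qed
    show "1 \<le> integral {0..R} (x None (snd i) (fst i))" if "i \<in> S" for i
      using delivered_by[OF V fP KK_holders(1)] KK_holders(2) that S unfolding r_def by auto
  qed (use S in \<open>auto simp: a'_def intro: schedule_integrable[OF V]\<close>)
  have "(\<Sum>c\<in>{a..M}. source_weight P x c (T c)) = (\<Sum>i\<in>KK. 2 powr (- r i))"
    unfolding KK_def r_def source_weight_def
    by (subst sum.Sigma) (auto simp: finite_children[OF fP] case_prod_beta)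
  also have "\<dots> \<le> 2 powr (-a') - 2 powr (-a' - real (card KK))"
    by (rule staggered_weight_bound[OF fKK count])
  also have "\<dots> \<le> 2 powr (-a')" by simp
  finally have "(\<Sum>c\<in>{a..M}. source_weight P x c (T c)) \<le> 2 powr (-a')" .
  moreover have "(2::real)^((a-1)*U) * 2 powr (-a') = 1"
  proof -
    have "(2::real) powr a' = 2^((a-1)*U)" unfolding a'_def by (rule powr_realpow) simp
    then show ?thesis by (simp add: powr_minus)
  qed
  ultimately show ?thesis
    by (metis mult_left_mono zero_le_numeral zero_le_power)
qed

subsection \<open>The diffusion bound\<close>

lemma delay_bounded_holds_chunk:
  assumes "p \<in> P" "Dmax P U x p \<le> ereal t" "1 \<le> c"
  shows "p \<in> holders P x c (real ((c-1)*U) + t)"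
proof -
  have "delay P U x c p \<le> Dmax P U x p" unfolding Dmax_def by (rule SUP_upper) (use assms(3) in simp)
  then have "recv P x p c - ereal (real ((c - 1) * U)) \<le> ereal t"
    using assms(2) unfolding delay_def by simp
  then have "recv P x p c \<le> ereal (real ((c-1)*U) + t)"
    by (cases "recv P x p c") (auto simp: algebra_simps)
  then show ?thesis using assms(1) unfolding holders_def by simp
qed

lemma Ndiff_le_source_weight:
  assumes V: "valid_schedule P U x" and fP: "finite P" and "1 \<le> c"
  shows "real (Ndiff P U x t)
           \<le> 2 powr t * (2^((c-1)*U) * source_weight P x c (real ((c-1)*U) + t))"
proof -
  define T where "T = real ((c-1)*U) + t"
  have "{p\<in>P. Dmax P U x p \<le> ereal t} \<subseteq> holders P x c T"
  proof
    fix p assume "p \<in> {p\<in>P. Dmax P U x p \<le> ereal t}"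
    then show "p \<in> holders P x c T"
      unfolding T_def using delay_bounded_holds_chunk[of p P U x t c] \<open>1 \<le> c\<close> by simp
  qed
  then have "Ndiff P U x t \<le> card (holders P x c T)"
    unfolding Ndiff_def by (rule card_mono[OF finite_holders[OF fP]])
  then have "real (Ndiff P U x t) \<le> real (card (holders P x c T))" by simp
  also have "\<dots> \<le> 2 powr T * source_weight P x c T" by (rule holders_weight_bound[OF V fP])
  also have "\<dots> = 2 powr t * (2^((c-1)*U) * source_weight P x c T)"
  proof -
    have "(2::real) powr T = 2 powr real ((c-1)*U) * 2 powr t" unfolding T_def by (rule powr_add)
    moreover have "(2::real) powr real ((c-1)*U) = 2^((c-1)*U)" by (rule powr_realpow) simp
    ultimately show ?thesis by simp
  qed
  finally show ?thesis unfolding T_def .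
qed

text \<open>The main estimate N(t) \<le> 2^t (1 - 2^-U), for every real t: average the previous
  bound over chunks 1..M with the Abel-summation lemma, and let M grow.\<close>
lemma Ndiff_bound:
  assumes V: "valid_schedule P U x" and fP: "finite P"
  shows "real (Ndiff P U x t) \<le> 2 powr t * (1 - (1/2)^U)"
proof (rule le_of_linear_growth)
  fix M :: nat assume "1 \<le> M"
  define \<beta> where "\<beta> = 1 - (1/2::real)^U"
  define W where "W c = source_weight P x c (real ((c-1)*U) + t)" for c
  have "0 \<le> \<beta>" unfolding \<beta>_def by (simp add: power_le_one)
  have "real M * real (Ndiff P U x t) = (\<Sum>c\<in>{1..M}. real (Ndiff P U x t))" by simp
  also have "\<dots> \<le> (\<Sum>c\<in>{1..M}. 2 powr t * (2^((c-1)*U) * W c))"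
    by (rule sum_mono) (use Ndiff_le_source_weight[OF V fP] in \<open>simp add: W_def\<close>)
  also have "\<dots> = 2 powr t * (\<Sum>c\<in>{1..M}. 2^((c-1)*U) * W c)" by (simp add: sum_distrib_left)
  also have "\<dots> \<le> 2 powr t * (1 + real (M - 1) * \<beta>)"
  proof (rule mult_left_mono)
    show "(\<Sum>c\<in>{1..M}. 2^((c-1)*U) * W c) \<le> 1 + real (M - 1) * \<beta>"
      unfolding \<beta>_def W_def by (rule weighted_tail_sum_bound) (rule source_weight_bound[OF V fP])
  qed simp
  also have "\<dots> \<le> 2 powr t + real M * (2 powr t * \<beta>)"
    using mult_right_mono[of "real (M - 1)" "real M" "2 powr t * \<beta>"] \<open>0 \<le> \<beta>\<close>
    by (simp add: algebra_simps)
  finally show "real M * real (Ndiff P U x t) \<le> 2 powr t + real M * (2 powr t * (1 - (1/2)^U))"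
    unfolding \<beta>_def .
qed

theorem mainTheorem2:
  fixes P :: "'p set" and U :: nat and x :: "'p schedule"
  assumes "finite P" and "U \<ge> 1" and "valid_schedule P U x"
  shows "(\<forall>t::nat. Ndiff P U x (real t) \<le> (\<Sum>j\<in>{1..U}. S_inf (int t - int j + 1)))
       \<and> (\<forall>t::nat. t \<ge> U \<longrightarrow>
            real (Ndiff P U x (real t)) \<le> (\<Sum>j\<in>{1..U}. (2::real) ^ (t - j))
          \<and> (\<Sum>j\<in>{1..U}. (2::real) ^ (t - j)) = 2 ^ t * (1 - (1/2) ^ U))"
proof -
  have bound: "real (Ndiff P U x (real t)) \<le> 2 ^ t * (1 - (1/2)^U)" for t :: nat
    using Ndiff_bound[OF assms(3,1), of "real t"] by (simp add: powr_realpow)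
  show ?thesis
  proof (intro conjI allI impI)
    fix t :: nat
    show "Ndiff P U x (real t) \<le> (\<Sum>j\<in>{1..U}. S_inf (int t - int j + 1))"
      by (rule nat_le_S_inf_window[OF bound])
    assume "U \<le> t"
    then show window: "(\<Sum>j\<in>{1..U}. (2::real) ^ (t - j)) = 2 ^ t * (1 - (1/2) ^ U)"
      by (rule power_window_sum)
    show "real (Ndiff P U x (real t)) \<le> (\<Sum>j\<in>{1..U}. (2::real) ^ (t - j))"
      unfolding window by (rule bound)
  qed
qed

end
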